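(* Suppose $\xi_r(\varpi^N)<1/2$ for some $r\in\{0,\ldots,N\}$. Then for every $\hat A\in\arg\min_{A\in\mathbb{R}^{n\times s}}\mathcal{J}(A)$ and every $A\in\mathbb{R}^{n\times s}$, $$\|\phi(A)-\phi(\hat A)\|_1\le\frac{2}{1-2\xi_r(\varpi^N)}\,\delta_r(A).$$ Moreover, if there exists $\tilde A\in\mathbb{R}^{n\times s}$ with $\|\phi(\tilde A)\|_0\le r$, then $$\arg\min_{A}\mathcal{J}(A)=\{A\in\mathbb{R}^{n\times s}:\|\phi(A)\|_0\le r\}=\{A\in\mathbb{R}^{n\times s}:\phi(A)=\phi(\tilde A)\}.$$
   Context: Data: integers $n,s,N\ge1$ and a dataset $\varpi^N=((x_1,y_1),\ldots,(x_N,y_N))$ with $x_t\in\mathbb{R}^n$, $y_t\in\mathbb{R}$. Let $\mathbb{T}=\{1,\ldots,N\}$, $\mathbb{S}=\{1,\ldots,s\}$. For $A=[a_1\ \cdots\ a_s]\in\mathbb{R}^{n\times s}$, $\sigma_A:\mathbb{T}\to\mathbb{S}$ is a switching signal satisfying $\sigma_A(t)\in\arg\min_{i\in\mathbb{S}}|y_t-x_t^\top a_i|$ for all $t$, selected uniquely by a fixed rule depending only on $A$ and the data (among all admissible choices, one maximizing $\min_{i}|I_i(A)|$, ties then broken by assigning the smallest admissible index). $I_i(A)=\{t\in\mathbb{T}:\sigma_A(t)=i\}$. Define $\phi(A)=\big(y_1-x_1^\top a_{\sigma_A(1)},\ldots,y_N-x_N^\top a_{\sigma_A(N)}\big)^\top\in\mathbb{R}^N$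 and $\mathcal{J}(A)=\|\phi(A)\|_1=\sum_{t=1}^N\min_{i\in\mathbb{S}}|y_t-a_i^\top x_t|$. For $\mathcal{T}\subset\mathbb{T}$, $\phi_{\mathcal{T}}(A)$ is the subvector of $\phi(A)$ indexed by $\mathcal{T}$. $\|w\|_0$ is the number of nonzero entries of $w$; $\mathcal{S}_r=\{w\in\mathbb{R}^N:\|w\|_0\le r\}$, and $\delta_r(A)=\inf_{w\in\mathcal{S}_r}\|\phi(A)-w\|_1$ (sum of the $N-r$ smallest absolute entries of $\phi(A)$). The $r$-th concentration ratio is $$\xi_r(\varpi^N)=\sup\Big\{\frac{\|\phi_{\mathcal{T}}(A)-\phi_{\mathcal{T}}(A')\|_1}{\|\phi(A)-\phi(A')\|_1}: A,A'\in\mathbb{R}^{n\times s},\ \mathcal{T}\subset\mathbb{T},\ \phi(A)\ne\phi(A'),\ |\mathcal{T}|\le r\Big\}.$$ *)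

theory Defs
  imports Complex_Main
begin

text \<open>Conventions (0-based indices): data points t \<in> {0..<N}, modes i \<in> {0..<s},
  coordinates j \<in> {0..<n}.  Regressor x t j, output y t.  A matrix
  A = [a_0 ... a_{s-1}] in R^{n x s} is a function A i j (column i, entry j),
  required to vanish outside the index range (set mats).\<close>

definition mats :: "nat \<Rightarrow> nat \<Rightarrow> (nat \<Rightarrow> nat \<Rightarrow> real) set" where
  "mats n s = {A. \<forall>i j. (s \<le> i \<or> n \<le> j) \<longrightarrow> A i j = 0}"

definition res :: "nat \<Rightarrow> (nat \<Rightarrow> nat \<Rightarrow> real) \<Rightarrow> (nat \<Rightarrow> real)
    \<Rightarrow> (nat \<Rightarrow> nat \<Rightarrow> real) \<Rightarrow> nat \<Rightarrow> nat \<Rightarrow> real" where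
  "res n x y A t i = y t - (\<Sum>j<n. x t j * A i j)"

definition admissible :: "nat \<Rightarrow> nat \<Rightarrow> nat \<Rightarrow> (nat \<Rightarrow> nat \<Rightarrow> real) \<Rightarrow> (nat \<Rightarrow> real)
    \<Rightarrow> (nat \<Rightarrow> nat \<Rightarrow> real) \<Rightarrow> (nat \<Rightarrow> nat) \<Rightarrow> bool" where
  "admissible n s N x y A \<sigma> \<longleftrightarrow>
     (\<forall>t<N. \<sigma> t < s \<and> (\<forall>i<s. \<bar>res n x y A t (\<sigma> t)\<bar> \<le> \<bar>res n x y A t i\<bar>))
     \<and> (\<forall>t. N \<le> t \<longrightarrow> \<sigma> t = 0)"

definition minI :: "nat \<Rightarrow> nat \<Rightarrow> (nat \<Rightarrow> nat) \<Rightarrow> nat" where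
  "minI s N \<sigma> = Min ((\<lambda>i. card {t. t < N \<and> \<sigma> t = i}) ` {..<s})"

definition best_signals :: "nat \<Rightarrow> nat \<Rightarrow> nat \<Rightarrow> (nat \<Rightarrow> nat \<Rightarrow> real) \<Rightarrow> (nat \<Rightarrow> real)
    \<Rightarrow> (nat \<Rightarrow> nat \<Rightarrow> real) \<Rightarrow> (nat \<Rightarrow> nat) set" where
  "best_signals n s N x y A = {\<sigma>. admissible n s N x y A \<sigma> \<and>
      (\<forall>\<tau>. admissible n s N x y A \<tau> \<longrightarrow> minI s N \<tau> \<le> minI s N \<sigma>)}"

definition lex_less :: "nat \<Rightarrow> (nat \<Rightarrow> nat) \<Rightarrow> (nat \<Rightarrow> nat) \<Rightarrow> bool" where
  "lex_less N \<sigma> \<tau> \<longleftrightarrow> (\<exists>t<N. (\<forall>u<t. \<sigma> u = \<tau> u) \<and> \<sigma> t < \<tau> t)"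

definition sigmaA :: "nat \<Rightarrow> nat \<Rightarrow> nat \<Rightarrow> (nat \<Rightarrow> nat \<Rightarrow> real) \<Rightarrow> (nat \<Rightarrow> real)
    \<Rightarrow> (nat \<Rightarrow> nat \<Rightarrow> real) \<Rightarrow> nat \<Rightarrow> nat" where
  "sigmaA n s N x y A = (THE \<sigma>. \<sigma> \<in> best_signals n s N x y A \<and>
      (\<forall>\<tau>\<in>best_signals n s N x y A. \<tau> \<noteq> \<sigma> \<longrightarrow> lex_less N \<sigma> \<tau>))"

definition phi :: "nat \<Rightarrow> nat \<Rightarrow> nat \<Rightarrow> (nat \<Rightarrow> nat \<Rightarrow> real) \<Rightarrow> (nat \<Rightarrow> real)
    \<Rightarrow> (nat \<Rightarrow> nat \<Rightarrow> real) \<Rightarrow> nat \<Rightarrow> real" where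
  "phi n s N x y A t = (if t < N then res n x y A t (sigmaA n s N x y A t) else 0)"

definition l1 :: "nat \<Rightarrow> (nat \<Rightarrow> real) \<Rightarrow> real" where
  "l1 N w = (\<Sum>t<N. \<bar>w t\<bar>)"

definition l0 :: "nat \<Rightarrow> (nat \<Rightarrow> real) \<Rightarrow> nat" where
  "l0 N w = card {t. t < N \<and> w t \<noteq> 0}"

definition J :: "nat \<Rightarrow> nat \<Rightarrow> nat \<Rightarrow> (nat \<Rightarrow> nat \<Rightarrow> real) \<Rightarrow> (nat \<Rightarrow> real)
    \<Rightarrow> (nat \<Rightarrow> nat \<Rightarrow> real) \<Rightarrow> real" where
  "J n s N x y A = l1 N (phi n s N x y A)"

definition delta :: "nat \<Rightarrow> nat \<Rightarrow> nat \<Rightarrow> (nat \<Rightarrow> nat \<Rightarrow> real) \<Rightarrow> (nat \<Rightarrow> real)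
    \<Rightarrow> nat \<Rightarrow> (nat \<Rightarrow> nat \<Rightarrow> real) \<Rightarrow> real" where
  "delta n s N x y r A = Inf {l1 N (\<lambda>t. phi n s N x y A t - w t) | w. l0 N w \<le> r}"

definition xi :: "nat \<Rightarrow> nat \<Rightarrow> nat \<Rightarrow> (nat \<Rightarrow> nat \<Rightarrow> real) \<Rightarrow> (nat \<Rightarrow> real) \<Rightarrow> nat \<Rightarrow> real" where
  "xi n s N x y r = Sup {(\<Sum>t\<in>T. \<bar>phi n s N x y A t - phi n s N x y A' t\<bar>)
                          / l1 N (\<lambda>t. phi n s N x y A t - phi n s N x y A' t)
       | A A' T. A \<in> mats n s \<and> A' \<in> mats n s \<and> T \<subseteq> {..<N}
                 \<and> phi n s N x y A \<noteq> phi n s N x y A' \<and> card T \<le> r}"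

definition argminJ :: "nat \<Rightarrow> nat \<Rightarrow> nat \<Rightarrow> (nat \<Rightarrow> nat \<Rightarrow> real) \<Rightarrow> (nat \<Rightarrow> real)
    \<Rightarrow> (nat \<Rightarrow> nat \<Rightarrow> real) set" where
  "argminJ n s N x y = {A \<in> mats n s. \<forall>B \<in> mats n s. J n s N x y A \<le> J n s N x y B}"

end

theory Submission
  imports Defs
begin

text \<open>The bound \<open>\<xi>\<^sub>r < 1/2\<close> is a null space property for the nonlinear map \<open>\<phi>\<close>: the difference
  \<open>\<phi>(A) - \<phi>(\<hat>A)\<close> carries at most a fraction \<open>\<xi>\<^sub>r\<close> of its \<open>\<ell>\<^sub>1\<close> mass on any \<open>r\<close> coordinates.
  Take \<open>T\<close> the support of a best \<open>r\<close>-sparse approximation of \<open>\<phi>(A)\<close>. Splitting all \<open>\<ell>\<^sub>1\<close> norms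
  over \<open>T\<close> and its complement and using \<open>\<J>(\<hat>A) \<le> \<J>(A)\<close> gives
  \<open>(1 - 2\<xi>\<^sub>r) \<parallel>\<phi>(A) - \<phi>(\<hat>A)\<parallel>\<^sub>1 \<le> 2 \<parallel>\<phi>\<^sub>T\<^sub>\<^sup>c(A)\<parallel>\<^sub>1 = 2 \<delta>\<^sub>r(A)\<close>.
  If \<open>\<phi>(\<tilde>A)\<close> is \<open>r\<close>-sparse, then \<open>\<delta>\<^sub>r(\<tilde>A) = 0\<close>, so every minimizer has the residual vector
  of \<open>\<tilde>A\<close>; the same estimate, read by contradiction, shows that every \<open>A\<close> with
  \<open>r\<close>-sparse \<open>\<phi>(A)\<close> is a minimizer.\<close>

lemma l1_nonneg: "0 \<le> l1 N w"
  unfolding l1_def by (simp add: sum_nonneg)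

lemma sum_abs_le_l1:
  assumes "T \<subseteq> {..<N}"
  shows "(\<Sum>t\<in>T. \<bar>w t\<bar>) \<le> l1 N w"
  unfolding l1_def using assms by (intro sum_mono2) auto

lemma l1_split:
  assumes "T \<subseteq> {..<N}"
  shows "l1 N w = (\<Sum>t\<in>{..<N} - T. \<bar>w t\<bar>) + (\<Sum>t\<in>T. \<bar>w t\<bar>)"
  unfolding l1_def using sum.subset_diff[OF assms] by simp

lemma l1_le_zero_imp_zero:
  assumes "l1 N w \<le> 0" and "t < N"
  shows "w t = 0"
  using sum_abs_le_l1[of "{t}" N w] assms l1_nonneg[of N w] by simp

lemma l1_diff_le_tail_of_concentration:
  fixes a b :: "nat \<Rightarrow> real"
  assumes T: "T \<subseteq> {..<N}"
    and concentrated: "(\<Sum>t\<in>T. \<bar>a t - b t\<bar>) \<le> c * l1 N (\<lambda>t. a t - b t)"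
    and smaller: "l1 N b \<le> l1 N a"
  shows "(1 - 2 * c) * l1 N (\<lambda>t. a t - b t) \<le> 2 * (\<Sum>t\<in>{..<N} - T. \<bar>a t\<bar>)"
proof -
  let ?C = "{..<N} - T"
  have on_T: "(\<Sum>t\<in>T. \<bar>a t\<bar>) - (\<Sum>t\<in>T. \<bar>a t - b t\<bar>) \<le> (\<Sum>t\<in>T. \<bar>b t\<bar>)"
    unfolding sum_subtractf[symmetric] by (rule sum_mono) linarith
  have on_C: "(\<Sum>t\<in>?C. \<bar>a t - b t\<bar>) - (\<Sum>t\<in>?C. \<bar>a t\<bar>) \<le> (\<Sum>t\<in>?C. \<bar>b t\<bar>)"
    unfolding sum_subtractf[symmetric] by (rule sum_mono) linarith
  show ?thesis
    using on_T on_C concentrated smaller l1_split[OF T, of a] l1_split[OF T, of b]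
      l1_split[OF T, of "\<lambda>t. a t - b t"]
    by (simp add: algebra_simps)
qed

lemma phi_beyond_N: "N \<le> t \<Longrightarrow> phi n s N x y A t = 0"
  unfolding phi_def by simp

lemma phi_eq_of_l1_diff_le_zero:
  assumes "l1 N (\<lambda>t. phi n s N x y A t - phi n s N x y B t) \<le> 0"
  shows "phi n s N x y A = phi n s N x y B"
proof
  fix t
  show "phi n s N x y A t = phi n s N x y B t"
    using l1_le_zero_imp_zero[OF assms, of t] phi_beyond_N[of N t]
    by (cases "t < N") auto
qed

lemma concentration_le_xi:
  assumes "A \<in> mats n s" "A' \<in> mats n s" "T \<subseteq> {..<N}" "card T \<le> r"
  shows "(\<Sum>t\<in>T. \<bar>phi n s N x y A t - phi n s N x y A' t\<bar>)
          \<le> xi n s N x y r * l1 N (\<lambda>t. phi n s N x y A t - phi n s N x y A' t)"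
proof (cases "phi n s N x y A = phi n s N x y A'")
  case True
  thus ?thesis by (simp add: l1_def)
next
  case False
  define d where "d B B' = (\<lambda>t. phi n s N x y B t - phi n s N x y B' t)" for B B'
  let ?S = "{(\<Sum>t\<in>U. \<bar>d B B' t\<bar>) / l1 N (d B B') | B B' U. B \<in> mats n s \<and> B' \<in> mats n s
              \<and> U \<subseteq> {..<N} \<and> phi n s N x y B \<noteq> phi n s N x y B' \<and> card U \<le> r}"
  have ratios_le_1: "bdd_above ?S"
  proof (rule bdd_aboveI[where M = 1])
    fix z assume "z \<in> ?S"
    then obtain B B' U where z: "z = (\<Sum>t\<in>U. \<bar>d B B' t\<bar>) / l1 N (d B B')" and "U \<subseteq> {..<N}"
      by blast
    then have "(\<Sum>t\<in>U. \<bar>d B B' t\<bar>) \<le> l1 N (d B B')" by (simp add: sum_abs_le_l1)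
    then show "z \<le> 1"
      unfolding z using l1_nonneg[of N "d B B'"]
      by (cases "l1 N (d B B') = 0") (auto simp: divide_le_eq_1)
  qed
  have "xi n s N x y r = Sup ?S" unfolding xi_def d_def ..
  moreover have "(\<Sum>t\<in>T. \<bar>d A A' t\<bar>) / l1 N (d A A') \<in> ?S" using assms False by blast
  ultimately have ratio_le: "(\<Sum>t\<in>T. \<bar>d A A' t\<bar>) / l1 N (d A A') \<le> xi n s N x y r"
    using cSup_upper[OF _ ratios_le_1] by simp
  have "\<not> l1 N (d A A') \<le> 0"
    using False phi_eq_of_l1_diff_le_zero unfolding d_def by blast
  with ratio_le show ?thesis
    unfolding d_def by (simp add: divide_le_eq mult.commute)
qed

lemma l1_phi_diff_le_delta:
  assumes A: "A \<in> mats n s" and Ahat: "Ahat \<in> mats n s"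
    and smaller: "J n s N x y Ahat \<le> J n s N x y A" and xi: "xi n s N x y r < 1/2"
  shows "l1 N (\<lambda>t. phi n s N x y A t - phi n s N x y Ahat t)
          \<le> 2 / (1 - 2 * xi n s N x y r) * delta n s N x y r A"
proof -
  let ?a = "phi n s N x y A" and ?b = "phi n s N x y Ahat" and ?c = "xi n s N x y r"
  let ?E = "l1 N (\<lambda>t. ?a t - ?b t) * (1 - 2 * ?c) / 2"
  let ?D = "{l1 N (\<lambda>t. ?a t - w t) | w. l0 N w \<le> r}"
  have "?E \<le> z" if "z \<in> ?D" for z
  proof -
    obtain w where z: "z = l1 N (\<lambda>t. ?a t - w t)" and w: "l0 N w \<le> r" using \<open>z \<in> ?D\<close> by blast
    let ?T = "{t. t < N \<and> w t \<noteq> 0}"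
    have T: "?T \<subseteq> {..<N}" by auto
    have "(1 - 2 * ?c) * l1 N (\<lambda>t. ?a t - ?b t) \<le> 2 * (\<Sum>t\<in>{..<N} - ?T. \<bar>?a t\<bar>)"
      using concentration_le_xi[OF A Ahat T] w smaller
      by (intro l1_diff_le_tail_of_concentration[OF T]) (simp_all add: l0_def J_def)
    also have "(\<Sum>t\<in>{..<N} - ?T. \<bar>?a t\<bar>) = (\<Sum>t\<in>{..<N} - ?T. \<bar>?a t - w t\<bar>)"
      by (rule sum.cong) auto
    also have "\<dots> \<le> z" unfolding z by (rule sum_abs_le_l1) auto
    finally show ?thesis by (simp add: mult.commute)
  qed
  moreover have "l1 N (\<lambda>t. ?a t - 0) \<in> ?D"
    by (intro CollectI exI[where x = "\<lambda>t. 0"]) (simp add: l0_def)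
  ultimately have "?E \<le> delta n s N x y r A"
    unfolding delta_def by (intro cInf_greatest) auto
  with xi show ?thesis by (simp add: field_simps)
qed

lemma delta_le_zero_of_sparse:
  assumes "l0 N (phi n s N x y A) \<le> r"
  shows "delta n s N x y r A \<le> 0"
proof -
  have "delta n s N x y r A \<le> l1 N (\<lambda>t. phi n s N x y A t - phi n s N x y A t)"
    unfolding delta_def
  proof (rule cInf_lower)
    show "bdd_below {l1 N (\<lambda>t. phi n s N x y A t - w t) | w. l0 N w \<le> r}"
      by (rule bdd_belowI[where m = 0]) (auto simp: l1_nonneg)
  qed (use assms in blast)
  then show ?thesis by (simp add: l1_def)
qed

lemma sparse_imp_J_le:
  assumes A: "A \<in> mats n s" and B: "B \<in> mats n s" and sparse: "l0 N (phi n s N x y A) \<le> r"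
    and xi: "xi n s N x y r < 1/2"
  shows "J n s N x y A \<le> J n s N x y B"
proof (rule ccontr)
  let ?a = "phi n s N x y A" and ?b = "phi n s N x y B"
  let ?T = "{t. t < N \<and> ?a t \<noteq> 0}"
  assume "\<not> ?thesis"
  then have smaller: "l1 N ?b < l1 N ?a" by (simp add: J_def)
  have T: "?T \<subseteq> {..<N}" by auto
  have "(1 - 2 * xi n s N x y r) * l1 N (\<lambda>t. ?a t - ?b t) \<le> 2 * (\<Sum>t\<in>{..<N} - ?T. \<bar>?a t\<bar>)"
    using concentration_le_xi[OF A B T] sparse smaller
    by (intro l1_diff_le_tail_of_concentration[OF T]) (simp_all add: l0_def)
  also have "(\<Sum>t\<in>{..<N} - ?T. \<bar>?a t\<bar>) = 0" by (rule sum.neutral) auto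
  finally have "l1 N (\<lambda>t. ?a t - ?b t) \<le> 0"
    using xi by (simp add: mult_le_0_iff l1_nonneg)
  then have "?a = ?b" by (rule phi_eq_of_l1_diff_le_zero)
  with smaller show False by simp
qed

lemma phi_argminJ_eq_of_sparse:
  assumes Ahat: "Ahat \<in> argminJ n s N x y" and At: "At \<in> mats n s"
    and sparse: "l0 N (phi n s N x y At) \<le> r" and xi: "xi n s N x y r < 1/2"
  shows "phi n s N x y Ahat = phi n s N x y At"
proof -
  have "l1 N (\<lambda>t. phi n s N x y At t - phi n s N x y Ahat t)
          \<le> 2 / (1 - 2 * xi n s N x y r) * delta n s N x y r At"
    using Ahat At unfolding argminJ_def by (intro l1_phi_diff_le_delta[OF _ _ _ xi]) auto
  also have "\<dots> \<le> 0"
    using xi delta_le_zero_of_sparse[OF sparse] by (intro mult_nonneg_nonpos) auto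
  finally show ?thesis by (rule phi_eq_of_l1_diff_le_zero[symmetric])
qed

theorem lemma3:
  fixes n s N r :: nat and x :: "nat \<Rightarrow> nat \<Rightarrow> real" and y :: "nat \<Rightarrow> real"
  assumes "1 \<le> n" and "1 \<le> s" and "1 \<le> N"
    and "r \<le> N"
    and "xi n s N x y r < 1/2"
  shows "(\<forall>Ahat \<in> argminJ n s N x y. \<forall>A \<in> mats n s.
            l1 N (\<lambda>t. phi n s N x y A t - phi n s N x y Ahat t)
              \<le> 2 / (1 - 2 * xi n s N x y r) * delta n s N x y r A)
       \<and> (\<forall>At \<in> mats n s. l0 N (phi n s N x y At) \<le> r \<longrightarrow>
            argminJ n s N x y = {A \<in> mats n s. l0 N (phi n s N x y A) \<le> r}
          \<and> {A \<in> mats n s. l0 N (phi n s N x y A) \<le> r}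
              = {A \<in> mats n s. phi n s N x y A = phi n s N x y At})"
proof -
  note xi = assms(5)
  have bound: "l1 N (\<lambda>t. phi n s N x y A t - phi n s N x y Ahat t)
                 \<le> 2 / (1 - 2 * xi n s N x y r) * delta n s N x y r A"
    if "Ahat \<in> argminJ n s N x y" "A \<in> mats n s" for Ahat A
    using that unfolding argminJ_def by (intro l1_phi_diff_le_delta[OF _ _ _ xi]) auto
  have sparse_minimizer: "A \<in> argminJ n s N x y"
    if "A \<in> mats n s" "l0 N (phi n s N x y A) \<le> r" for A
    using that sparse_imp_J_le[OF _ _ _ xi] unfolding argminJ_def by blast
  show ?thesis
  proof (intro conjI ballI impI)
    fix At assume At: "At \<in> mats n s" "l0 N (phi n s N x y At) \<le> r"
    show "argminJ n s N x y = {A \<in> mats n s. l0 N (phi n s N x y A) \<le> r}"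
    proof (intro equalityI subsetI)
      fix A assume A: "A \<in> argminJ n s N x y"
      then have "A \<in> mats n s" by (simp add: argminJ_def)
      with phi_argminJ_eq_of_sparse[OF A At(1,2) xi] At(2)
      show "A \<in> {A \<in> mats n s. l0 N (phi n s N x y A) \<le> r}" by simp
    qed (simp add: sparse_minimizer)
    show "{A \<in> mats n s. l0 N (phi n s N x y A) \<le> r}
            = {A \<in> mats n s. phi n s N x y A = phi n s N x y At}"
    proof (intro equalityI subsetI)
      fix A assume "A \<in> {A \<in> mats n s. l0 N (phi n s N x y A) \<le> r}"
      with phi_argminJ_eq_of_sparse[OF sparse_minimizer At(1,2) xi]
      show "A \<in> {A \<in> mats n s. phi n s N x y A = phi n s N x y At}" by simp
    qed (use At(2) in simp)
  qed (fact bound)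
qed

end
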